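(* For each $n\ge 2$ let $p=p_n\in(0,1)$ and let $X\sim\mathrm{Binomial}(n,p)$, $\hat p=X/n$, $\hat q=1-\hat p$. Fix $\alpha\in(0,1)$, let $\kappa_\alpha=z_{1-\alpha/2}^2$, and let $$CI_{new}=\left[\frac{(n-1)\hat p+(\kappa_\alpha-1)/2\mp\sqrt{n\kappa_\alpha\hat p\hat q+(\kappa_\alpha-1)^2/4-\hat p\hat q}}{n+\kappa_\alpha-2}\right]$$ (the lower endpoint with $-$, the upper with $+$). If $np\to\infty$ and $n(1-p)\to\infty$ as $n\to\infty$, then $\lim_{n\to\infty}\mathbb P(p\in CI_{new})=1-\alpha$.
   Context: $z_{1-\alpha/2}$ is the $(1-\alpha/2)$-quantile of the standard normal distribution. The success probability $p=p_n$ may depend on $n$. *)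

theory Defs
  imports "HOL-Probability.Probability"
begin

definition Phi :: "real \<Rightarrow> real" where
  "Phi x = measure std_normal_distribution {..x}"

definition normal_quantile :: "real \<Rightarrow> real" where
  "normal_quantile q = (THE z. Phi z = q)"

definition kappa :: "real \<Rightarrow> real" where
  "kappa \<alpha> = (normal_quantile (1 - \<alpha> / 2))\<^sup>2"

definition ci_lower :: "real \<Rightarrow> nat \<Rightarrow> nat \<Rightarrow> real" where
  "ci_lower \<alpha> n k =
     (let ph = real k / real n; qh = 1 - ph; \<kappa> = kappa \<alpha> in
      ((real n - 1) * ph + (\<kappa> - 1) / 2
        - sqrt (real n * \<kappa> * ph * qh + (\<kappa> - 1)\<^sup>2 / 4 - ph * qh)) / (real n + \<kappa> - 2))"

definition ci_upper :: "real \<Rightarrow> nat \<Rightarrow> nat \<Rightarrow> real" where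
  "ci_upper \<alpha> n k =
     (let ph = real k / real n; qh = 1 - ph; \<kappa> = kappa \<alpha> in
      ((real n - 1) * ph + (\<kappa> - 1) / 2
        + sqrt (real n * \<kappa> * ph * qh + (\<kappa> - 1)\<^sup>2 / 4 - ph * qh)) / (real n + \<kappa> - 2))"

end

theory Submission
  imports Defs
begin

(* Squaring out the square root, p lies in CI_new iff
     n (p_hat - p)^2 - (1 - 2p) (p_hat - p) <= kappa p (1 - p),
   i.e. iff  Z^2 - g Z <= kappa  for the standardized count Z = (X - np) / sqrt (np(1-p)), where
   g = (1 - 2p) / sqrt (np(1-p)) is the skewness of Binomial(n, p).  If np -> oo and n(1-p) -> oo then
   np(1-p) -> oo, so g -> 0 and, by the de Moivre-Laplace theorem (proved with Levy's continuity
   theorem), Z converges in distribution to N(0,1).  For |g| <= d the region {x. x^2 - g x <= z^2}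
   lies between the intervals |x| <= z - d and |x| <= z + d, hence the coverage probability tends to
   Phi z - Phi (-z) = 1 - alpha for z = sqrt kappa = z_{1-alpha/2}. *)

section \<open>The interval as a quadratic inequality\<close>

lemma abs_le_sqrt_iff: "\<bar>y\<bar> \<le> sqrt D \<longleftrightarrow> y\<^sup>2 \<le> D" for y D :: real
  by (metis order_trans real_sqrt_abs real_sqrt_le_iff linorder_not_le less_imp_le)

lemma mem_ci_iff:
  assumes n: "2 \<le> n" and \<kappa>: "0 < kappa \<alpha>"
  shows "ci_lower \<alpha> n k \<le> x \<and> x \<le> ci_upper \<alpha> n k \<longleftrightarrow>
    n * (k / n - x)\<^sup>2 - (1 - 2 * x) * (k / n - x) \<le> kappa \<alpha> * x * (1 - x)"
proof -
  define K where "K = kappa \<alpha>"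
  define h where "h = real k / n"
  define m where "m = n + K - 2"
  define b where "b = (real n - 1) * h + (K - 1) / 2"
  define D where "D = n * K * h * (1 - h) + (K - 1)\<^sup>2 / 4 - h * (1 - h)"
  have m: "m > 0" using n \<kappa> unfolding m_def K_def by simp
  have "ci_lower \<alpha> n k = (b - sqrt D) / m" "ci_upper \<alpha> n k = (b + sqrt D) / m"
    unfolding ci_lower_def ci_upper_def Let_def b_def D_def m_def K_def h_def by simp_all
  then have "ci_lower \<alpha> n k \<le> x \<and> x \<le> ci_upper \<alpha> n k \<longleftrightarrow> \<bar>m * x - b\<bar> \<le> sqrt D"
    using m by (auto simp: divide_le_eq le_divide_eq abs_le_iff algebra_simps)
  also have "\<dots> \<longleftrightarrow> (m * x - b)\<^sup>2 - D \<le> 0"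
    by (simp add: abs_le_sqrt_iff)
  also have "(m * x - b)\<^sup>2 - D = m * (n * (h - x)\<^sup>2 - (1 - 2 * x) * (h - x) - K * x * (1 - x))"
    unfolding m_def b_def D_def by (simp add: algebra_simps power2_eq_square)
  also have "\<dots> \<le> 0 \<longleftrightarrow> n * (h - x)\<^sup>2 - (1 - 2 * x) * (h - x) \<le> K * x * (1 - x)"
    using m by (simp add: mult_le_0_iff)
  finally show ?thesis unfolding h_def K_def .
qed

section \<open>The standard normal distribution function\<close>

lemma Phi_eq_cdf: "Phi = cdf std_normal_distribution"
  by (simp add: fun_eq_iff Phi_def cdf_def)

lemma std_normal_singleton: "measure std_normal_distribution {x} = 0"
proof -
  have "AE y in lborel. y \<notin> {x}"
    by (intro AE_not_in finite_imp_null_set_lborel) simp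
  then have "AE y in lborel. y \<in> {x} \<longrightarrow> std_normal_density y = 0"
    by eventually_elim simp
  then have "{x} \<in> null_sets std_normal_distribution"
    by (simp add: null_sets_density_iff)
  then show ?thesis by (simp add: measure_def null_setsD1)
qed

lemma isCont_Phi: "isCont Phi x"
proof -
  interpret real_distribution std_normal_distribution by (rule real_dist_normal_dist)
  show ?thesis unfolding Phi_eq_cdf by (simp add: isCont_cdf std_normal_singleton)
qed

lemma Phi_strict_mono: "strict_mono Phi"
proof
  fix a b :: real assume ab: "a < b"
  interpret real_distribution std_normal_distribution by (rule real_dist_normal_dist)
  have "{a<..b} \<notin> null_sets std_normal_distribution"
  proof
    assume "{a<..b} \<in> null_sets std_normal_distribution"
    then have "AE x in lborel. x \<in> {a<..b} \<longrightarrow> std_normal_density x = 0"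
      by (simp add: null_sets_density_iff)
    then have "AE x in lborel. x \<notin> {a<..b}"
      by eventually_elim (metis less_irrefl normal_density_pos zero_less_one)
    then have "{a<..b} \<in> null_sets lborel" by (simp add: AE_iff_null_sets)
    with ab show False by auto
  qed
  then have "0 < measure std_normal_distribution {a<..b}"
    by (auto simp: less_le emeasure_eq_measure)
  also have "measure std_normal_distribution {a<..b} = Phi b - Phi a"
    unfolding Phi_eq_cdf using ab by (simp add: cdf_diff_eq)
  finally show "Phi a < Phi b" by simp
qed

lemma distr_std_normal_uminus: "distr std_normal_distribution borel uminus = std_normal_distribution"
proof -
  have "density (distr lborel borel uminus) (\<lambda>x. ennreal (std_normal_density x))
     = distr (density lborel (\<lambda>x. ennreal (std_normal_density (- x)))) borel uminus"
    by (rule density_distr) auto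
  then show ?thesis
    by (simp add: lborel_distr_uminus std_normal_density_def)
qed

lemma Phi_minus: "Phi (- x) = 1 - Phi x"
proof -
  interpret real_distribution std_normal_distribution by (rule real_dist_normal_dist)
  have "Phi (- x) = measure (distr std_normal_distribution borel uminus) {..- x}"
    by (simp add: distr_std_normal_uminus Phi_def)
  also have "\<dots> = prob {x..}"
    by (subst measure_distr) (auto intro!: arg_cong[where f=prob])
  also have "\<dots> = 1 - prob {..<x}"
    using prob_compl[of "{..<x}"] by (simp add: Compl_eq_Diff_UNIV[symmetric])
  also have "prob {..<x} = Phi x"
  proof -
    have "{..x} = {..<x} \<union> {x}" by auto
    then show ?thesis
      using finite_measure_Union[of "{..<x}" "{x}"] std_normal_singleton[of x] by (simp add: Phi_def)
  qed
  finally show ?thesis .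
qed

lemma Phi_normal_quantile:
  assumes "0 < q" "q < 1"
  shows "Phi (normal_quantile q) = q"
proof -
  interpret real_distribution std_normal_distribution by (rule real_dist_normal_dist)
  have "eventually (\<lambda>x. Phi x < q) at_bot" "eventually (\<lambda>x. q < Phi x) at_top"
    using order_tendstoD(2)[OF cdf_lim_at_bot assms(1)] order_tendstoD(1)[OF cdf_lim_at_top_prob assms(2)]
    by (simp_all add: Phi_eq_cdf)
  then obtain a b where "Phi a < q" "q < Phi b"
    by (metis eventually_at_bot_linorder eventually_at_top_linorder order_refl)
  moreover from this have "a \<le> b"
    using strict_mono_less[OF Phi_strict_mono, of a b] by simp
  ultimately obtain z where z: "Phi z = q"
    using IVT[of Phi a q b] isCont_Phi by fastforce
  have "normal_quantile q = z"
    unfolding normal_quantile_def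
    by (rule the_equality) (use z strict_mono_eq[OF Phi_strict_mono] in auto)
  with z show ?thesis by simp
qed

lemma normal_quantile_pos:
  assumes "1/2 < q" "q < 1"
  shows "0 < normal_quantile q"
proof -
  have "Phi 0 < Phi (normal_quantile q)"
    using assms Phi_normal_quantile[of q] Phi_minus[of 0] by simp
  then show ?thesis using strict_mono_less[OF Phi_strict_mono] by blast
qed

section \<open>The de Moivre-Laplace theorem\<close>

(* For p = 0 or p = 1 the scale is 0 and the division returns the junk value 0. *)
definition std_binomial :: "nat \<Rightarrow> real \<Rightarrow> real measure" where
  "std_binomial n p =
     distr (measure_pmf (binomial_pmf n p)) borel (\<lambda>k. (real k - n * p) / sqrt (n * p * (1 - p)))"

lemma real_distribution_std_binomial: "real_distribution (std_binomial n p)"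
  unfolding std_binomial_def by (simp add: prob_space.real_distribution_distr prob_space_measure_pmf)

lemma norm_iexp_sub_taylor2:
  "cmod (iexp x - (1 + \<i> * x - x\<^sup>2 / 2)) \<le> \<bar>x\<bar> ^ 3 / 6"
proof -
  have "(\<Sum>k\<le>2. (\<i> * complex_of_real x) ^ k / fact k) = 1 + \<i> * x - x\<^sup>2 / 2"
    by (simp add: eval_nat_numeral power2_eq_square field_simps)
  moreover have "fact 3 = (6 :: real)" by (simp add: eval_nat_numeral)
  ultimately show ?thesis using iexp_approx1[of x 2] by simp
qed

lemma norm_bernoulli_char_approx:
  fixes p w :: real
  assumes "0 \<le> p" "p \<le> 1"
  shows "cmod ((1 - p) * iexp (- (p * w)) + p * iexp ((1 - p) * w) - (1 - p * (1 - p) * w\<^sup>2 / 2))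
          \<le> p * (1 - p) * \<bar>w\<bar> ^ 3 / 6"
proof -
  define E where "E x = iexp x - (1 + \<i> * x - x\<^sup>2 / 2)" for x :: real
  have "(1 - p) * iexp (- (p * w)) + p * iexp ((1 - p) * w) - (1 - p * (1 - p) * w\<^sup>2 / 2)
      = (1 - p) * E (- (p * w)) + p * E ((1 - p) * w)"
    unfolding E_def by (simp add: field_simps power2_eq_square)
  also have "cmod \<dots> \<le> (1 - p) * cmod (E (- (p * w))) + p * cmod (E ((1 - p) * w))"
    using assms by (auto intro!: order.trans[OF norm_triangle_ineq] simp: norm_mult simp del: of_real_diff)
  also have "\<dots> \<le> (1 - p) * (\<bar>- (p * w)\<bar> ^ 3 / 6) + p * (\<bar>(1 - p) * w\<bar> ^ 3 / 6)"
    using assms unfolding E_def by (intro add_mono mult_left_mono norm_iexp_sub_taylor2) auto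
  also have "\<dots> = p * (1 - p) * \<bar>w\<bar> ^ 3 / 6 * (1 - 2 * (p * (1 - p)))"
  proof -
    have "\<bar>- (p * w)\<bar> = p * \<bar>w\<bar>" "\<bar>(1 - p) * w\<bar> = (1 - p) * \<bar>w\<bar>"
      using assms by (simp_all add: abs_mult)
    then show ?thesis by (simp only:) (simp add: power3_eq_cube field_simps)
  qed
  also have "\<dots> \<le> p * (1 - p) * \<bar>w\<bar> ^ 3 / 6"
    using assms by (simp add: mult_left_le)
  finally show ?thesis .
qed

lemma iexp_of_nat_mult_add: "iexp (real k * x + real m * y) = iexp x ^ k * iexp y ^ m"
proof -
  have "\<i> * complex_of_real (real k * x + real m * y) = of_nat k * (\<i> * x) + of_nat m * (\<i> * y)"
    by (simp add: algebra_simps)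
  then show ?thesis by (simp add: exp_add flip: exp_of_nat_mult)
qed

lemma char_binomial_centred:
  assumes "0 \<le> p" "p \<le> 1"
  shows "char (distr (measure_pmf (binomial_pmf n p)) borel (\<lambda>k. (real k - n * p) / s)) t
       = (complex_of_real (1 - p) * iexp (- (p * (t / s))) + p * iexp ((1 - p) * (t / s))) ^ n"
proof -
  define w where "w = t / s"
  define a where "a = p * iexp ((1 - p) * w)"
  define b where "b = complex_of_real (1 - p) * iexp (- (p * w))"
  have "char (distr (measure_pmf (binomial_pmf n p)) borel (\<lambda>k. (real k - n * p) / s)) t
      = measure_pmf.expectation (binomial_pmf n p) (\<lambda>k. iexp ((real k - n * p) * w))"
    unfolding char_def w_def by (subst integral_distr) (auto simp: mult.commute)
  also have "\<dots> = (\<Sum>k\<le>n. (real (n choose k) * p ^ k * (1 - p) ^ (n - k)) *\<^sub>R iexp ((real k - n * p) * w))"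
    using assms by (intro expectation_binomial_pmf') auto
  also have "\<dots> = (\<Sum>k\<le>n. of_nat (n choose k) * a ^ k * b ^ (n - k))"
  proof (intro sum.cong refl)
    fix k assume "k \<in> {..n}"
    then have "(real k - n * p) * w = real k * ((1 - p) * w) + real (n - k) * (- (p * w))"
      by (simp add: of_nat_diff algebra_simps)
    then have "iexp ((real k - n * p) * w) = iexp ((1 - p) * w) ^ k * iexp (- (p * w)) ^ (n - k)"
      by (simp only: iexp_of_nat_mult_add)
    then show "(real (n choose k) * p ^ k * (1 - p) ^ (n - k)) *\<^sub>R iexp ((real k - n * p) * w)
        = of_nat (n choose k) * a ^ k * b ^ (n - k)"
      unfolding a_def b_def by (simp add: scaleR_conv_of_real power_mult_distrib)
  qed
  also have "\<dots> = (a + b) ^ n" by (simp add: binomial_ring)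
  finally show ?thesis unfolding a_def b_def w_def by (simp add: add.commute)
qed

lemma char_std_binomial_approx:
  assumes p: "0 < p" "p < 1" and n: "0 < n" and t: "t\<^sup>2 \<le> 4 * real n"
  shows "cmod (char (std_binomial n p) t - complex_of_real ((1 + (- (t\<^sup>2) / 2) / real n) ^ n))
           \<le> \<bar>t\<bar> ^ 3 / 6 / sqrt (n * p * (1 - p))"
proof -
  define s where "s = sqrt (n * p * (1 - p))"
  define w where "w = t / s"
  define g where "g = complex_of_real (1 - p) * iexp (- (p * w)) + p * iexp ((1 - p) * w)"
  define b where "b = complex_of_real (1 - p * (1 - p) * w\<^sup>2 / 2)"
  have s: "s > 0" and s2: "s\<^sup>2 = n * p * (1 - p)"
    unfolding s_def using p n by simp_all
  have "p * (1 - p) * w\<^sup>2 = t\<^sup>2 / n"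
    unfolding w_def power_divide s2 using p n by (simp add: field_simps)
  then have "1 - p * (1 - p) * w\<^sup>2 / 2 = 1 + (- (t\<^sup>2) / 2) / real n"
    by simp
  then have b_eq: "b = complex_of_real (1 + (- (t\<^sup>2) / 2) / real n)"
    unfolding b_def by (simp only:)
  have "char (std_binomial n p) t = g ^ n"
    unfolding std_binomial_def g_def w_def s_def using p by (intro char_binomial_centred) auto
  moreover have "cmod g \<le> 1"
  proof -
    have "cmod g \<le> cmod ((1 - p) * iexp (- (p * w))) + cmod (p * iexp ((1 - p) * w))"
      unfolding g_def by (rule norm_triangle_ineq)
    also have "\<dots> = 1" using p by (simp add: norm_mult del: of_real_diff)
    finally show ?thesis .
  qed
  moreover have "cmod b \<le> 1"
    unfolding b_eq norm_of_real using n t by (auto simp: abs_le_iff field_simps)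
  ultimately have "cmod (char (std_binomial n p) t - b ^ n) \<le> n * cmod (g - b)"
    by (simp add: norm_power_diff)
  also have "\<dots> \<le> n * (p * (1 - p) * \<bar>w\<bar> ^ 3 / 6)"
    unfolding g_def b_def using p by (intro mult_left_mono norm_bernoulli_char_approx) auto
  also have "\<dots> = s\<^sup>2 * \<bar>w\<bar> ^ 3 / 6"
    by (simp add: s2)
  also have "\<dots> = \<bar>t\<bar> ^ 3 / 6 / s"
    unfolding w_def using s by (simp add: power_divide abs_divide eval_nat_numeral field_simps)
  finally show ?thesis unfolding b_eq s_def of_real_power .
qed

theorem de_Moivre_Laplace:
  fixes p :: "nat \<Rightarrow> real"
  assumes p: "eventually (\<lambda>n. 0 < p n \<and> p n < 1) sequentially"
    and var: "filterlim (\<lambda>n. real n * p n * (1 - p n)) at_top sequentially"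
  shows "weak_conv_m (\<lambda>n. std_binomial n (p n)) std_normal_distribution"
proof (rule levy_continuity)
  fix t :: real
  define s where "s n = sqrt (n * p n * (1 - p n))" for n
  have "filterlim s at_infinity sequentially"
    unfolding s_def by (intro filterlim_at_top_imp_at_infinity filterlim_compose[OF sqrt_at_top var])
  then have err: "(\<lambda>n. \<bar>t\<bar> ^ 3 / 6 / s n) \<longlonglongrightarrow> 0"
    by (rule tendsto_divide_0[OF tendsto_const])
  have "eventually (\<lambda>n. t\<^sup>2 / 4 \<le> real n) sequentially"
    using filterlim_real_sequentially unfolding filterlim_at_top by (rule spec)
  with p eventually_gt_at_top[of 0]
  have "eventually (\<lambda>n. norm (char (std_binomial n (p n)) t
          - complex_of_real ((1 + (- (t\<^sup>2) / 2) / real n) ^ n)) \<le> \<bar>t\<bar> ^ 3 / 6 / s n) sequentially"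
    by eventually_elim (unfold s_def, rule char_std_binomial_approx, auto)
  moreover have "(\<lambda>n. complex_of_real ((1 + (- (t\<^sup>2) / 2) / real n) ^ n))
      \<longlonglongrightarrow> complex_of_real (exp (- (t\<^sup>2) / 2))"
    by (intro tendsto_of_real tendsto_exp_limit_sequentially)
  ultimately show "(\<lambda>n. char (std_binomial n (p n)) t) \<longlonglongrightarrow> char std_normal_distribution t"
    unfolding char_std_normal_distribution by (rule Lim_transform[OF _ Lim_null_comparison[OF _ err], rotated])
qed (simp_all add: real_distribution_std_binomial real_dist_normal_dist)

section \<open>Asymptotic coverage\<close>

lemma filterlim_binomial_variance_at_top:
  fixes p :: "nat \<Rightarrow> real"
  assumes p: "eventually (\<lambda>n. 0 < p n \<and> p n < 1) sequentially"
    and np: "filterlim (\<lambda>n. real n * p n) at_top sequentially"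
    and nq: "filterlim (\<lambda>n. real n * (1 - p n)) at_top sequentially"
  shows "filterlim (\<lambda>n. real n * p n * (1 - p n)) at_top sequentially"
proof -
  have pos: "eventually (\<lambda>n. 0 < n \<and> 0 < p n \<and> p n < 1) sequentially"
    using p eventually_gt_at_top[of 0] by eventually_elim simp
  then have "eventually (\<lambda>n. inverse (n * p n) + inverse (n * (1 - p n)) = inverse (n * p n * (1 - p n)))
      sequentially"
    by eventually_elim (simp add: field_simps)
  moreover have "(\<lambda>n. inverse (n * p n) + inverse (n * (1 - p n))) \<longlonglongrightarrow> 0"
    using tendsto_add[OF tendsto_inverse_0_at_top[OF np] tendsto_inverse_0_at_top[OF nq]] by simp
  ultimately have "(\<lambda>n. inverse (n * p n * (1 - p n))) \<longlonglongrightarrow> 0"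
    by (rule Lim_transform_eventually[rotated])
  moreover have "eventually (\<lambda>n. 0 < inverse (n * p n * (1 - p n))) sequentially"
    using pos by eventually_elim simp
  ultimately show ?thesis
    using filterlim_inverse_at_top by fastforce
qed

definition binomial_skewness :: "nat \<Rightarrow> real \<Rightarrow> real" where
  "binomial_skewness n p = (1 - 2 * p) / sqrt (n * p * (1 - p))"

lemma tendsto_binomial_skewness_zero:
  fixes p :: "nat \<Rightarrow> real"
  assumes p: "eventually (\<lambda>n. 0 < p n \<and> p n < 1) sequentially"
    and var: "filterlim (\<lambda>n. real n * p n * (1 - p n)) at_top sequentially"
  shows "(\<lambda>n. binomial_skewness n (p n)) \<longlonglongrightarrow> 0"
  unfolding binomial_skewness_def
proof (rule Lim_null_comparison)
  have "filterlim (\<lambda>n. sqrt (n * p n * (1 - p n))) at_infinity sequentially"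
    by (intro filterlim_at_top_imp_at_infinity filterlim_compose[OF sqrt_at_top var])
  then show "(\<lambda>n. 1 / sqrt (n * p n * (1 - p n))) \<longlonglongrightarrow> 0"
    by (rule tendsto_divide_0[OF tendsto_const])
  show "eventually (\<lambda>n. norm ((1 - 2 * p n) / sqrt (n * p n * (1 - p n)))
      \<le> 1 / sqrt (n * p n * (1 - p n))) sequentially"
    using p by eventually_elim (auto simp: abs_divide intro!: divide_right_mono)
qed

lemma quadratic_region_inner:
  fixes c x z d :: real
  assumes "0 < d" "d < z" "\<bar>c\<bar> \<le> d" "\<bar>x\<bar> \<le> z - d"
  shows "x\<^sup>2 - c * x \<le> z\<^sup>2"
proof -
  have "x\<^sup>2 \<le> (z - d)\<^sup>2"
    using power_mono[OF assms(4) abs_ge_zero, of 2] by simp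
  moreover have "\<bar>c * x\<bar> \<le> d * (z - d)"
    unfolding abs_mult using assms by (intro mult_mono) auto
  ultimately have "x\<^sup>2 - c * x \<le> z * (z - d)"
    by (simp add: power2_eq_square algebra_simps abs_le_iff)
  also have "\<dots> \<le> z\<^sup>2"
    using assms by (simp add: power2_eq_square mult_left_mono)
  finally show ?thesis .
qed

lemma quadratic_region_outer:
  fixes c x z d :: real
  assumes "0 < z" "\<bar>c\<bar> \<le> d" "x\<^sup>2 - c * x \<le> z\<^sup>2"
  shows "\<bar>x\<bar> \<le> z + d"
proof (rule ccontr)
  assume "\<not> \<bar>x\<bar> \<le> z + d"
  then have "(z + d) * z < \<bar>x\<bar> * (\<bar>x\<bar> - d)"
    using assms by (intro mult_strict_mono) auto
  also have "\<dots> \<le> x\<^sup>2 - c * x"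
    using mult_right_mono[OF assms(2) abs_ge_zero[of x]] abs_ge_self[of "c * x"]
    by (simp add: power2_eq_square algebra_simps abs_mult)
  also have "\<dots> \<le> z\<^sup>2" by (rule assms(3))
  finally show False
    using assms(1,2) by (simp add: power2_eq_square algebra_simps mult_less_0_iff)
qed

lemma tendsto_measure_quadratic_region:
  fixes M :: "nat \<Rightarrow> real measure" and c :: "nat \<Rightarrow> real"
  assumes M: "\<And>n. real_distribution (M n)" and L: "real_distribution L"
    and conv: "weak_conv_m M L" and cont: "\<And>x. isCont (cdf L) x"
    and c: "c \<longlonglongrightarrow> 0" and z: "0 < z"
  shows "(\<lambda>n. measure (M n) {x. x\<^sup>2 - c n * x \<le> z\<^sup>2}) \<longlonglongrightarrow> cdf L z - cdf L (- z)"
proof -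
  interpret M: real_distribution "M n" for n by (rule M)
  define G where "G u = cdf L u - cdf L (- u)" for u
  define R where "R n = {x. x\<^sup>2 - c n * x \<le> z\<^sup>2}" for n
  have G: "isCont G z"
    unfolding G_def using isCont_o2[OF isCont_minus[OF continuous_ident] cont]
    by (intro isCont_diff cont)
  have interval: "(\<lambda>n. measure (M n) {- u<..u}) \<longlonglongrightarrow> G u" if "0 < u" for u
  proof -
    have "(\<lambda>n. cdf (M n) x) \<longlonglongrightarrow> cdf L x" for x
      using conv cont by (simp add: weak_conv_m_def weak_conv_def)
    moreover have "measure (M n) {- u<..u} = cdf (M n) u - cdf (M n) (- u)" for n
      using that by (simp add: M.cdf_diff_eq)
    ultimately show ?thesis
      unfolding G_def by (simp add: tendsto_diff)
  qed
  have small: "eventually (\<lambda>n. \<bar>c n\<bar> \<le> d) sequentially" if "0 < d" for d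
    using tendstoD[OF c that] by eventually_elim simp
  have R: "R n \<in> sets (M n)" for n
    unfolding R_def by measurable
  show ?thesis
    unfolding R_def[symmetric] G_def[symmetric]
  proof (rule order_tendstoI)
    fix a assume "a < G z"
    then have "eventually (\<lambda>u. a < G u) (at z)"
      using G order_tendstoD(1) unfolding isCont_def by blast
    then obtain e where e: "0 < e" "\<And>u. u \<noteq> z \<Longrightarrow> dist u z < e \<Longrightarrow> a < G u"
      unfolding eventually_at by auto
    define d where "d = min (e / 2) (z / 2)"
    have d: "0 < d" "d < z" "a < G (z - d)"
      using e(1) e(2)[of "z - d"] z by (auto simp: d_def dist_real_def)
    have "eventually (\<lambda>n. a < measure (M n) {- (z - d)<..z - d}) sequentially"
      using order_tendstoD(1)[OF interval d(3)] d by simp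
    with small[OF d(1)] show "eventually (\<lambda>n. a < measure (M n) (R n)) sequentially"
    proof eventually_elim
      case (elim n)
      have "{- (z - d)<..z - d} \<subseteq> R n"
      proof
        fix x assume "x \<in> {- (z - d)<..z - d}"
        then have "\<bar>x\<bar> \<le> z - d" by auto
        with d elim(1) show "x \<in> R n"
          unfolding R_def by (simp add: quadratic_region_inner)
      qed
      from M.finite_measure_mono[OF this R] elim(2) show ?case by linarith
    qed
  next
    fix b assume "G z < b"
    then have "eventually (\<lambda>u. G u < b) (at z)"
      using G order_tendstoD(2) unfolding isCont_def by blast
    then obtain e where e: "0 < e" "\<And>u. u \<noteq> z \<Longrightarrow> dist u z < e \<Longrightarrow> G u < b"
      unfolding eventually_at by auto
    define d where "d = e / 4"
    have d: "0 < d" "G (z + 2 * d) < b"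
      using e(1) e(2)[of "z + 2 * d"] by (auto simp: d_def dist_real_def)
    have "eventually (\<lambda>n. measure (M n) {- (z + 2 * d)<..z + 2 * d} < b) sequentially"
      using order_tendstoD(2)[OF interval d(2)] d z by simp
    with small[OF d(1)] show "eventually (\<lambda>n. measure (M n) (R n) < b) sequentially"
    proof eventually_elim
      case (elim n)
      have "R n \<subseteq> {- (z + 2 * d)<..z + 2 * d}"
      proof
        fix x assume "x \<in> R n"
        with z elim(1) have "\<bar>x\<bar> \<le> z + d"
          unfolding R_def by (simp add: quadratic_region_outer)
        with d show "x \<in> {- (z + 2 * d)<..z + 2 * d}" by auto
      qed
      then have "measure (M n) (R n) \<le> measure (M n) {- (z + 2 * d)<..z + 2 * d}"
        by (rule M.finite_measure_mono) simp
      with elim(2) show ?case by linarith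
    qed
  qed
qed

lemma coverage_eq_std_binomial_region:
  assumes n: "2 \<le> n" and p: "0 < p" "p < 1" and \<kappa>: "0 < kappa \<alpha>"
  shows "measure_pmf.prob (binomial_pmf n p) {k. ci_lower \<alpha> n k \<le> p \<and> p \<le> ci_upper \<alpha> n k}
       = measure (std_binomial n p) {x. x\<^sup>2 - binomial_skewness n p * x \<le> kappa \<alpha>}"
proof -
  define s where "s = sqrt (n * p * (1 - p))"
  define Z where "Z k = (real k - n * p) / s" for k
  have s: "0 < s" "s\<^sup>2 = n * p * (1 - p)"
    unfolding s_def using n p by simp_all
  have "ci_lower \<alpha> n k \<le> p \<and> p \<le> ci_upper \<alpha> n k \<longleftrightarrow> (Z k)\<^sup>2 - (1 - 2 * p) / s * Z k \<le> kappa \<alpha>" for k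
  proof -
    have "n * (k / n - p)\<^sup>2 - (1 - 2 * p) * (k / n - p)
        = ((k - n * p)\<^sup>2 - (1 - 2 * p) * (k - n * p)) / n"
      using n by (simp add: field_simps power2_eq_square)
    also have "\<dots> = p * (1 - p) * ((k - n * p)\<^sup>2 - (1 - 2 * p) * (k - n * p)) / s\<^sup>2"
      using n p by (simp add: s(2))
    also have "\<dots> = p * (1 - p) * ((Z k)\<^sup>2 - (1 - 2 * p) / s * Z k)"
      unfolding Z_def using s by (simp add: field_simps power2_eq_square)
    finally have "n * (k / n - p)\<^sup>2 - (1 - 2 * p) * (k / n - p)
        = p * (1 - p) * ((Z k)\<^sup>2 - (1 - 2 * p) / s * Z k)" .
    then show ?thesis
      unfolding mem_ci_iff[OF n \<kappa>] using p by (simp add: mult.assoc)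
  qed
  then show ?thesis
    unfolding std_binomial_def binomial_skewness_def s_def[symmetric] Z_def[symmetric, abs_def]
    by (subst measure_distr) (auto intro!: arg_cong[where f = "measure_pmf.prob _"])
qed

theorem mainTheorem5:
  fixes p :: "nat \<Rightarrow> real" and \<alpha> :: real
  assumes p_range: "\<And>n. n \<ge> 2 \<Longrightarrow> 0 < p n \<and> p n < 1"
    and alpha: "0 < \<alpha>" "\<alpha> < 1"
    and np: "filterlim (\<lambda>n. real n * p n) at_top sequentially"
    and nq: "filterlim (\<lambda>n. real n * (1 - p n)) at_top sequentially"
  shows "(\<lambda>n. measure_pmf.prob (binomial_pmf n (p n))
            {k. ci_lower \<alpha> n k \<le> p n \<and> p n \<le> ci_upper \<alpha> n k})
         \<longlonglongrightarrow> 1 - \<alpha>"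
proof -
  define z where "z = normal_quantile (1 - \<alpha> / 2)"
  have z: "Phi z = 1 - \<alpha> / 2" "0 < z"
    unfolding z_def using alpha by (simp_all add: Phi_normal_quantile normal_quantile_pos)
  have \<kappa>: "kappa \<alpha> = z\<^sup>2" "0 < kappa \<alpha>"
    unfolding kappa_def z_def using z(2) by (simp_all add: z_def)
  have p: "eventually (\<lambda>n. 0 < p n \<and> p n < 1) sequentially"
    using eventually_ge_at_top[of 2] by eventually_elim (rule p_range)
  have var: "filterlim (\<lambda>n. real n * p n * (1 - p n)) at_top sequentially"
    using p np nq by (rule filterlim_binomial_variance_at_top)
  have "(\<lambda>n. measure (std_binomial n (p n)) {x. x\<^sup>2 - binomial_skewness n (p n) * x \<le> z\<^sup>2})
      \<longlonglongrightarrow> cdf std_normal_distribution z - cdf std_normal_distribution (- z)"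
    by (rule tendsto_measure_quadratic_region[OF real_distribution_std_binomial real_dist_normal_dist
          de_Moivre_Laplace[OF p var] _ tendsto_binomial_skewness_zero[OF p var] z(2)])
       (simp add: isCont_Phi flip: Phi_eq_cdf)
  also have "cdf std_normal_distribution z - cdf std_normal_distribution (- z) = 1 - \<alpha>"
    using z(1) by (simp add: Phi_minus flip: Phi_eq_cdf)
  finally show ?thesis
    unfolding \<kappa>(1)[symmetric]
    by (rule Lim_transform_eventually)
       (use eventually_ge_at_top[of 2] in \<open>eventually_elim, simp add: p_range \<kappa>(2) coverage_eq_std_binomial_region\<close>)
qed

end
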